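(* Let $\mathcal{B}$ be a prime Banach algebra over $\mathbb{R}$ or $\mathbb{C}$ and let $D$ be a dense subset of $\mathcal{B}$. Suppose $\mathcal{B}$ admits a continuous automorphism $f$ and there exist fixed positive integers $p,q$ such that $$f(x^{p}\circ y^{q})+[x^{p},y^{q}]\in Z(\mathcal{B})\quad\text{for all } x,y\in D.$$ Then $\mathcal{B}$ is commutative.
   Context: $Z(\mathcal{B})$ denotes the center of $\mathcal{B}$. For $x,y\in\mathcal{B}$, $x\circ y=xy+yx$ and $[x,y]=xy-yx$. $\mathcal{B}$ is prime if $x\mathcal{B}y=\{0\}$ implies $x=0$ or $y=0$. An automorphism of $\mathcal{B}$ is a bijective map $f:\mathcal{B}\to\mathcal{B}$ with $f(x+y)=f(x)+f(y)$ and $f(xy)=f(x)f(y)$ for all $x,y$. *)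

theory Defs
  imports "HOL-Analysis.Analysis"
begin

definition center :: "'a::times set" where
  "center = {z. \<forall>x. z * x = x * z}"

definition jordan :: "'a::{times,plus} \<Rightarrow> 'a \<Rightarrow> 'a" where
  "jordan x y = x * y + y * x"

definition commutator :: "'a::{times,minus} \<Rightarrow> 'a \<Rightarrow> 'a" where
  "commutator x y = x * y - y * x"

text \<open>Positive powers in a possibly non-unital algebra: ppow x n = x^n for n \<ge> 1
  (the value for n = 0 is an irrelevant convention, here 0).\<close>
fun ppow :: "'a::{times,zero} \<Rightarrow> nat \<Rightarrow> 'a" where
  "ppow x 0 = 0"
| "ppow x (Suc 0) = x"
| "ppow x (Suc (Suc n)) = x * ppow x (Suc n)"

definition prime_ring :: "'a::{times,zero} itself \<Rightarrow> bool" where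
  "prime_ring _ \<longleftrightarrow> (\<forall>x y::'a. (\<forall>b. x * b * y = 0) \<longrightarrow> x = 0 \<or> y = 0)"

definition ring_automorphism :: "('a::{times,plus} \<Rightarrow> 'a) \<Rightarrow> bool" where
  "ring_automorphism f \<longleftrightarrow> bij f \<and> (\<forall>x y. f (x + y) = f x + f y) \<and> (\<forall>x y. f (x * y) = f x * f y)"

end

theory Submission imports Defs begin

text \<open>Taking \<open>x = y\<close> in the hypothesis gives \<open>f (2 x\<^sup>n) \<in> Z(\<B>)\<close> for \<open>n = p + q \<ge> 2\<close>, and since
  \<open>f\<close> is an injective homomorphism \<open>x\<^sup>n \<in> Z(\<B>)\<close> for \<open>x \<in> D\<close>; by density and continuity this holds
  for all \<open>x\<close>. Differentiating \<open>t \<mapsto> (x + t y)\<^sup>n\<close> at \<open>t = 0\<close> keeps us inside the closed subspace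
  \<open>Z(\<B>)\<close>. If some \<open>c = x\<^sup>n\<close> is nonzero, then at the central point \<open>c\<close> the derivative is
  \<open>n c\<^sup>n\<^sup>-\<^sup>1 y\<close>, so \<open>c\<^sup>n\<^sup>-\<^sup>1 [y, w] = 0\<close>, and in a prime ring a nonzero central element is not a
  zero divisor. Otherwise every \<open>x\<^sup>n\<close> vanishes, and the derivative gives
  \<open>x\<^sup>n\<^sup>-\<^sup>1 y x\<^sup>n\<^sup>-\<^sup>1 = 0\<close>, so \<open>x\<^sup>n\<^sup>-\<^sup>1 = 0\<close> by primeness; descending on \<open>n\<close>, \<open>\<B> = 0\<close>.\<close>

lemma ppow_add:
  fixes x :: "'a::{semigroup_mult,zero}"
  shows "0 < m \<Longrightarrow> 0 < n \<Longrightarrow> ppow x m * ppow x n = ppow x (m + n)"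
proof (induction m)
  case (Suc k)
  show ?case
  proof (cases k)
    case 0
    then show ?thesis using Suc.prems by (cases n) auto
  next
    case (Suc j)
    then have "ppow x (Suc k) * ppow x n = x * (ppow x k * ppow x n)"
      by (simp add: mult.assoc)
    also have "\<dots> = ppow x (Suc k + n)"
      using Suc.IH Suc.prems Suc by (cases n) auto
    finally show ?thesis .
  qed
qed simp

lemma continuous_on_ppow: "continuous_on UNIV (\<lambda>x::'a::real_normed_algebra. ppow x n)"
proof (cases n)
  case (Suc k)
  have "continuous_on UNIV (\<lambda>x::'a. ppow x (Suc k))"
  proof (induction k)
    case (Suc k)
    then show ?case by (simp del: ppow.simps add: ppow.simps(3)) (intro continuous_intros)
  qed (simp add: continuous_on_id)
  then show ?thesis using Suc by simp
qed simp

lemma center_mult: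
  fixes a b :: "'a::semigroup_mult"
  assumes "a \<in> center" "b \<in> center"
  shows "a * b \<in> center"
proof -
  have "a * b * x = x * (a * b)" for x
  proof -
    have "a * b * x = a * (x * b)"
      using assms(2) by (simp add: center_def mult.assoc)
    also have "\<dots> = (x * a) * b"
      using assms(1) by (simp add: center_def flip: mult.assoc)
    finally show ?thesis by (simp add: mult.assoc)
  qed
  then show ?thesis by (simp add: center_def)
qed

lemma center_ppow:
  fixes c :: "'a::ring"
  shows "c \<in> center \<Longrightarrow> ppow c n \<in> center"
proof (induction c n rule: ppow.induct)
  case (3 x n)
  then show ?case by (simp only: ppow.simps center_mult)
qed (simp_all add: center_def)

lemma subspace_center: "subspace (center :: 'a::real_algebra set)"
proof -
  have "(a + b) * x = x * (a + b)" if "a * x = x * a" "b * x = x * b" for a b x :: 'a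
    by (simp add: distrib_left distrib_right that)
  moreover have "(r *\<^sub>R a) * x = x * (r *\<^sub>R a)" if "a * x = x * a" for r and a x :: 'a
    by (simp add: that)
  ultimately show ?thesis
    unfolding subspace_def center_def by simp
qed

lemma closed_center: "closed (center :: 'a::real_normed_algebra set)"
proof -
  have "center = (\<Inter>x. {z::'a. z * x = x * z})"
    by (auto simp: center_def)
  moreover have "closed (\<Inter>x. {z::'a. z * x = x * z})"
    by (intro closed_INT ballI closed_Collect_eq continuous_intros)
  ultimately show ?thesis
    by simp
qed

lemma has_vector_derivative_difference_quotient:
  fixes g :: "real \<Rightarrow> 'a::real_normed_vector"
  assumes "(g has_vector_derivative L) (at a)"
  shows "((\<lambda>t. (g t - g a) /\<^sub>R (t - a)) \<longlongrightarrow> L) (at a)"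
proof -
  let ?r = "\<lambda>t. (1 / norm (t - a)) *\<^sub>R (g t - (g a + (t - a) *\<^sub>R L))"
  have "(?r \<longlongrightarrow> 0) (at a)"
    using assms unfolding has_vector_derivative_def has_derivative_at2 by blast
  moreover have "norm (?r t) = norm ((g t - g a) /\<^sub>R (t - a) - L)" if "t \<noteq> a" for t
  proof -
    have "(g t - g a) /\<^sub>R (t - a) - L = inverse (t - a) *\<^sub>R (g t - (g a + (t - a) *\<^sub>R L))"
      using that by (simp add: scaleR_diff_right scaleR_add_right)
    then show ?thesis by (simp add: field_class.field_divide_inverse mult.commute)
  qed
  ultimately have "((\<lambda>t. norm ((g t - g a) /\<^sub>R (t - a) - L)) \<longlongrightarrow> 0) (at a)"
    by (auto intro: Lim_transform_eventually[OF tendsto_norm_zero] simp: eventually_at_filter)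
  then have "((\<lambda>t. (g t - g a) /\<^sub>R (t - a) - L) \<longlongrightarrow> 0) (at a)"
    by (rule tendsto_norm_zero_cancel)
  then show ?thesis
    using Lim_null by blast
qed

lemma has_vector_derivative_in_closed_subspace:
  fixes g :: "real \<Rightarrow> 'a::real_normed_vector"
  assumes "subspace S" "closed S" "\<And>t. g t \<in> S"
    and "(g has_vector_derivative L) (at a)"
  shows "L \<in> S"
proof (rule Lim_in_closed_set[OF assms(2) _ _ has_vector_derivative_difference_quotient[OF assms(4)]])
  show "\<forall>\<^sub>F t in at a. (g t - g a) /\<^sub>R (t - a) \<in> S"
    using assms(1,3) by (simp add: subspace_diff subspace_scale)
qed simp

fun ppow_deriv :: "'a::{times,zero,plus} \<Rightarrow> 'a \<Rightarrow> nat \<Rightarrow> 'a" where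
  "ppow_deriv x y 0 = 0"
| "ppow_deriv x y (Suc 0) = y"
| "ppow_deriv x y (Suc (Suc n)) = y * ppow x (Suc n) + x * ppow_deriv x y (Suc n)"

lemma has_vector_derivative_ppow:
  fixes x y :: "'a::real_normed_algebra"
  shows "((\<lambda>t. ppow (x + t *\<^sub>R y) n) has_vector_derivative ppow_deriv x y n) (at 0)"
  unfolding has_vector_derivative_def
proof (induction x y n rule: ppow_deriv.induct)
  case (3 x y n)
  have "((\<lambda>t. (x + t *\<^sub>R y) * ppow (x + t *\<^sub>R y) (Suc n)) has_derivative
      (\<lambda>t. (x + 0 *\<^sub>R y) * (t *\<^sub>R ppow_deriv x y (Suc n)) + (t *\<^sub>R y) * ppow (x + 0 *\<^sub>R y) (Suc n))) (at 0)"
    by (rule has_derivative_mult) (auto intro!: derivative_eq_intros 3)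
  then show ?case
    by (auto simp: algebra_simps elim!: has_derivative_eq_rhs)
qed (auto intro!: derivative_eq_intros)

lemma ppow_deriv_in_closed_subspace:
  fixes S :: "'a::real_normed_algebra set"
  assumes "subspace S" "closed S" "\<And>z. ppow z n \<in> S"
  shows "ppow_deriv x y n \<in> S"
  using has_vector_derivative_in_closed_subspace[OF assms(1,2) _ has_vector_derivative_ppow] assms(3)
  by blast

lemma ppow_deriv_central:
  fixes c y :: "'a::real_algebra"
  assumes c: "c \<in> center"
  shows "ppow_deriv c y (Suc (Suc n)) = real (Suc (Suc n)) *\<^sub>R (ppow c (Suc n) * y)"
proof (induction n)
  case 0
  have "y * c = c * y" using c by (simp add: center_def)
  then show ?case by (simp add: scaleR_2)
next
  case (Suc n)
  have yc: "y * ppow c (Suc (Suc n)) = ppow c (Suc (Suc n)) * y"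
    using center_ppow[OF c, of "Suc (Suc n)"] by (simp add: center_def)
  have "ppow_deriv c y (Suc (Suc (Suc n))) = y * ppow c (Suc (Suc n)) + c * ppow_deriv c y (Suc (Suc n))"
    by simp
  also have "\<dots> = ppow c (Suc (Suc n)) * y + real (Suc (Suc n)) *\<^sub>R (c * (ppow c (Suc n) * y))"
    by (simp only: Suc.IH mult_scaleR_right yc)
  also have "c * (ppow c (Suc n) * y) = ppow c (Suc (Suc n)) * y"
    by (simp add: mult.assoc)
  also have "ppow c (Suc (Suc n)) * y + real (Suc (Suc n)) *\<^sub>R (ppow c (Suc (Suc n)) * y)
     = (1 + real (Suc (Suc n))) *\<^sub>R (ppow c (Suc (Suc n)) * y)"
    by (simp only: scaleR_add_left scaleR_one)
  finally show ?case
    by simp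
qed

lemma prime_ring_central_mult_eq_0:
  fixes c a :: "'a::ring"
  assumes "prime_ring TYPE('a)" "c \<in> center" "c \<noteq> 0" "c * a = 0"
  shows "a = 0"
proof -
  have "c * b * a = 0" for b
  proof -
    have "c * b * a = b * c * a" using assms(2) by (simp add: center_def)
    also have "\<dots> = 0" using assms(4) by (simp add: mult.assoc)
    finally show ?thesis .
  qed
  then show ?thesis using assms(1,3) unfolding prime_ring_def by blast
qed

lemma prime_ring_central_ppow_neq_0:
  fixes c :: "'a::ring"
  assumes "prime_ring TYPE('a)" "c \<in> center" "c \<noteq> 0"
  shows "ppow c (Suc n) \<noteq> 0"
proof (induction n)
  case (Suc n)
  then show ?case using prime_ring_central_mult_eq_0[OF assms, of "ppow c (Suc n)"] by auto
qed (use assms in simp)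

lemma prime_ring_commute_if_central_ppow:
  fixes c y w :: "'a::real_normed_algebra"
  assumes prime: "prime_ring TYPE('a)" and c: "c \<in> center" "c \<noteq> 0"
    and central: "\<And>z::'a. ppow z (Suc (Suc m)) \<in> center"
  shows "y * w = w * y"
proof -
  let ?c = "ppow c (Suc m)"
  have cc: "?c \<in> center" by (rule center_ppow[OF c(1)])
  have "ppow_deriv c y (Suc (Suc m)) \<in> center"
    by (rule ppow_deriv_in_closed_subspace[OF subspace_center closed_center central])
  then have "inverse (real (Suc (Suc m))) *\<^sub>R (real (Suc (Suc m)) *\<^sub>R (?c * y)) \<in> center"
    unfolding ppow_deriv_central[OF c(1)] by (rule subspace_scale[OF subspace_center])
  then have cy: "?c * y \<in> center" by simp
  have "?c * (y * w) = (?c * y) * w" by (simp add: mult.assoc)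
  also have "\<dots> = w * (?c * y)" using cy by (simp add: center_def)
  also have "\<dots> = (w * ?c) * y" by (simp add: mult.assoc)
  also have "\<dots> = ?c * (w * y)" using cc by (simp add: center_def mult.assoc)
  finally have "?c * (y * w - w * y) = 0" by (simp add: algebra_simps)
  then have "y * w - w * y = 0"
    by (rule prime_ring_central_mult_eq_0[OF prime cc prime_ring_central_ppow_neq_0[OF prime c]])
  then show ?thesis by simp
qed

lemma prime_ring_ppow_eq_0_descent:
  fixes x :: "'a::real_normed_algebra"
  assumes prime: "prime_ring TYPE('a)" and zero: "\<And>z::'a. ppow z (Suc (Suc m)) = 0"
  shows "ppow x (Suc m) = 0"
proof -
  have "ppow x (Suc m) * y * ppow x (Suc m) = 0" for y
  proof -
    have "ppow_deriv x y (Suc (Suc m)) \<in> {0}"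
      by (rule ppow_deriv_in_closed_subspace) (simp_all add: zero del: ppow.simps)
    then have "0 = ppow x (Suc m) * ppow_deriv x y (Suc (Suc m))" by simp
    also have "\<dots> = ppow x (Suc m) * y * ppow x (Suc m) + (ppow x (Suc m) * x) * ppow_deriv x y (Suc m)"
      by (simp add: algebra_simps mult.assoc del: ppow.simps)
    also have "ppow x (Suc m) * x = 0"
      using ppow_add[of "Suc m" 1 x] zero by simp
    finally show ?thesis by simp
  qed
  then show ?thesis using prime unfolding prime_ring_def by blast
qed

lemma prime_ring_trivial_if_ppow_eq_0:
  fixes x :: "'a::real_normed_algebra"
  assumes prime: "prime_ring TYPE('a)"
  shows "(\<And>z::'a. ppow z (Suc n) = 0) \<Longrightarrow> x = 0"
proof (induction n)
  case (Suc n)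
  then show ?case using prime_ring_ppow_eq_0_descent[OF prime] by blast
qed simp

lemma prime_ring_commutative_if_ppow_central:
  fixes x y :: "'a::real_normed_algebra"
  assumes prime: "prime_ring TYPE('a)" and central: "\<And>z::'a. ppow z (Suc (Suc m)) \<in> center"
  shows "x * y = y * x"
proof (cases "\<exists>z::'a. ppow z (Suc (Suc m)) \<noteq> 0")
  case True
  then show ?thesis
    using prime_ring_commute_if_central_ppow[OF prime central _ central] by blast
next
  case False
  then show ?thesis
    using prime_ring_trivial_if_ppow_eq_0[OF prime, of "Suc m"] by (metis mult_zero_left)
qed

lemma center_if_ring_automorphism_image:
  assumes "ring_automorphism f" "f a \<in> center"
  shows "a \<in> center"
proof -
  have "a * w = w * a" for w
  proof -
    have "f (a * w) = f (w * a)"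
      using assms unfolding ring_automorphism_def center_def by simp
    then show ?thesis
      using assms(1) unfolding ring_automorphism_def by (meson bij_is_inj injD)
  qed
  then show ?thesis by (simp add: center_def)
qed

lemma jordan_ppow_ppow:
  fixes x :: "'a::{semigroup_mult,monoid_add}"
  assumes "0 < p" "0 < q"
  shows "jordan (ppow x p) (ppow x q) = ppow x (p + q) + ppow x (p + q)"
  using ppow_add[OF assms, of x] ppow_add[OF assms(2,1), of x] by (simp add: jordan_def add.commute)

lemma commutator_ppow_ppow:
  fixes x :: "'a::{semigroup_mult,group_add}"
  assumes "0 < p" "0 < q"
  shows "commutator (ppow x p) (ppow x q) = 0"
  using ppow_add[OF assms, of x] ppow_add[OF assms(2,1), of x] by (simp add: commutator_def add.commute)

theorem mainTheorem5:
  fixes D :: "'a::{real_normed_algebra, banach} set"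
    and f :: "'a \<Rightarrow> 'a"
    and p q :: nat
  assumes prime: "prime_ring TYPE('a)"
    and dense: "closure D = UNIV"
    and aut: "ring_automorphism f"
    and cont: "continuous_on UNIV f"
    and pq: "p > 0" "q > 0"
    and cond: "\<forall>x\<in>D. \<forall>y\<in>D. f (jordan (ppow x p) (ppow y q)) + commutator (ppow x p) (ppow y q) \<in> center"
  shows "\<forall>x y::'a. x * y = y * x"
proof -
  have on_D: "D \<subseteq> {x. ppow x (p + q) \<in> center}"
  proof
    fix x assume "x \<in> D"
    then have "f (jordan (ppow x p) (ppow x q)) + commutator (ppow x p) (ppow x q) \<in> center"
      using cond by blast
    then have "f (ppow x (p + q) + ppow x (p + q)) \<in> center"
      by (simp add: jordan_ppow_ppow[OF pq] commutator_ppow_ppow[OF pq])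
    then have "2 *\<^sub>R f (ppow x (p + q)) \<in> center"
      using aut by (simp add: ring_automorphism_def scaleR_2)
    then have "inverse 2 *\<^sub>R (2 *\<^sub>R f (ppow x (p + q))) \<in> center"
      by (rule subspace_scale[OF subspace_center])
    then show "x \<in> {x. ppow x (p + q) \<in> center}"
      using center_if_ring_automorphism_image[OF aut] by simp
  qed
  have "closed {x::'a. ppow x (p + q) \<in> center}"
    using continuous_closed_preimage[OF continuous_on_ppow closed_UNIV closed_center]
    by (simp add: vimage_def)
  then have "closure D \<subseteq> {x. ppow x (p + q) \<in> center}"
    by (rule closure_minimal[OF on_D])
  moreover obtain m where "p + q = Suc (Suc m)"
    using pq by (cases p; cases q) auto
  ultimately have "\<And>x::'a. ppow x (Suc (Suc m)) \<in> center"
    using dense by auto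
  then show ?thesis
    using prime_ring_commutative_if_ppow_central[OF prime] by blast
qed

end
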